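(* Let $\Gamma=(V,E,w)$ be a finite simple weighted digraph with vertex set $V=\{1,\dots,n\}$ and non-negative weights (with $w_{ij}=0$ iff $(i,j)\notin E$), and let $L=D-A$ be its graph Laplacian. Then $\sigma(L)=\{d^{+}(1),\dots,d^{+}(n)\}$ (as multisets) if and only if $\Gamma$ is acyclic.
   Context: $d^{+}(i)=\sum_{j\in V} w_{ij}$ is the out-degree of vertex $i$, $D=\mathrm{diag}(d^{+}(1),\dots,d^{+}(n))$, $A=[w_{ij}]$, and $L=D-A$. $\sigma(L)$ denotes the multiset of eigenvalues of $L$ counted with algebraic multiplicity. A digraph is acyclic if it contains no directed cycle. *)

theory Defs
  imports "Jordan_Normal_Form.Char_Poly" "HOL-Computational_Algebra.Fundamental_Theorem_Algebra"
begin

text \<open>Weighted digraph on vertex set {0..<n} (the paper's {1..n}, shifted by one),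
  given by a weight function w; (i,j) is an edge iff w i j \<noteq> 0.\<close>

definition out_degree :: "nat \<Rightarrow> (nat \<Rightarrow> nat \<Rightarrow> real) \<Rightarrow> nat \<Rightarrow> real" where
  "out_degree n w i = (\<Sum>j<n. w i j)"

definition digraph_edges :: "nat \<Rightarrow> (nat \<Rightarrow> nat \<Rightarrow> real) \<Rightarrow> (nat \<times> nat) set" where
  "digraph_edges n w = {(i, j). i < n \<and> j < n \<and> w i j \<noteq> 0}"

definition laplacian :: "nat \<Rightarrow> (nat \<Rightarrow> nat \<Rightarrow> real) \<Rightarrow> real mat" where
  "laplacian n w = mat n n (\<lambda>(i, j). (if i = j then out_degree n w i else 0) - w i j)"

definition spectrum_mset :: "real mat \<Rightarrow> complex multiset" where
  "spectrum_mset A = proots (char_poly (map_mat complex_of_real A))"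

end

(* If the off-diagonal support of a square matrix is acyclic, every permutation p other than the
   identity moves some i to p i along a zero entry, for otherwise the orbits of p would be directed
   cycles. Hence only the identity survives in the Leibniz expansion of det (x I - L), and the
   characteristic polynomial is the product of the factors x - L_ii.

   Conversely, let L have non-positive off-diagonal entries (as the Laplacian does) and choose c so
   large that c I - L = D + A with D = diag (c - L_ii) and A the negated off-diagonal part, both
   entrywise nonnegative. Schur triangularisation gives tr (c I - L)^m = sum over the eigenvalues a
   of (c - a)^m, which equals tr D^m if the spectrum of L is its diagonal. But a directed cycle of
   length m makes some diagonal entry of A^m positive, and (D + A)^m >= D^m + A^m entrywise, so
   tr (D + A)^m > tr D^m. *)

theory Submission
  imports Defs "HOL-Combinatorics.Cycles" "Jordan_Normal_Form.Schur_Decomposition"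
    "Jordan_Normal_Form.Jordan_Normal_Form_Uniqueness"
begin

definition offdiag_support :: "'a::zero mat \<Rightarrow> (nat \<times> nat) set" where
  "offdiag_support A = {(i, j). i < dim_row A \<and> j < dim_col A \<and> i \<noteq> j \<and> A $$ (i, j) \<noteq> 0}"

lemma not_acyclic_if_permutation_along:
  assumes perm: "permutation p" and "p \<noteq> id"
    and along: "\<And>i. p i \<noteq> i \<Longrightarrow> (i, p i) \<in> R"
  shows "\<not> acyclic R"
proof
  assume acyclic: "acyclic R"
  obtain i where moved: "p i \<noteq> i" using \<open>p \<noteq> id\<close> by (metis eq_id_iff)
  have orbit_moved: "p ((p ^^ k) i) \<noteq> (p ^^ k) i" for k
  proof
    assume "p ((p ^^ k) i) = (p ^^ k) i"
    then have "(p ^^ k) (p i) = (p ^^ k) i" by (simp add: funpow_swap1)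
    then show False
      using moved inj_fn[OF bij_is_inj[OF permutation_bijective[OF perm]]] by (simp add: inj_eq)
  qed
  have orbit_reachable: "(i, (p ^^ Suc k) i) \<in> R\<^sup>+" for k
  proof (induction k)
    case 0
    show ?case using along[OF moved] by auto
  next
    case (Suc k)
    then show ?case using along[OF orbit_moved[of "Suc k"]] by (simp add: trancl_into_trancl)
  qed
  obtain N where "p ^^ N = id" "N > 0" using permutation_is_nilpotent[OF perm] .
  then have "(i, i) \<in> R\<^sup>+" using orbit_reachable[of "N - 1"] by simp
  with acyclic show False unfolding acyclic_def by blast
qed

lemma det_eq_prod_diag_if_acyclic:
  fixes A :: "'a::comm_ring_1 mat"
  assumes A: "A \<in> carrier_mat n n" and acyclic: "acyclic (offdiag_support A)"
  shows "det A = (\<Prod>i<n. A $$ (i, i))"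
proof -
  let ?term = "\<lambda>p. signof p * (\<Prod>i = 0..<n. A $$ (i, p i))"
  have vanish: "?term p = 0" if p: "p permutes {0..<n}" "p \<noteq> id" for p
  proof -
    have "permutation p" using p(1) permutation_permutes by blast
    then obtain i where i: "p i \<noteq> i" "(i, p i) \<notin> offdiag_support A"
      using not_acyclic_if_permutation_along[of p "offdiag_support A"] p(2) acyclic by blast
    have "i < n" "p i < n" using p(1) i(1) by (auto simp: permutes_def)
    with i A have "A $$ (i, p i) = 0" by (auto simp: offdiag_support_def)
    with \<open>i < n\<close> have "(\<Prod>i = 0..<n. A $$ (i, p i)) = 0" by (intro prod_zero) auto
    then show ?thesis by simp
  qed
  have "det A = (\<Sum>p \<in> {p. p permutes {0..<n}}. ?term p)" by (rule det_def'[OF A])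
  also have "\<dots> = (\<Sum>p \<in> {id}. ?term p)"
    using vanish by (intro sum.mono_neutral_right) (auto simp: finite_permutations permutes_id)
  finally show ?thesis by (simp add: atLeast0LessThan)
qed

lemma char_poly_eq_prod_diag_if_acyclic:
  fixes A :: "'a::comm_ring_1 mat"
  assumes A: "A \<in> carrier_mat n n" and acyclic: "acyclic (offdiag_support A)"
  shows "char_poly A = (\<Prod>i<n. [:- A $$ (i, i), 1:])"
proof -
  have "offdiag_support (char_poly_matrix A) = offdiag_support A"
    using A by (auto simp: offdiag_support_def char_poly_matrix_def)
  then have "det (char_poly_matrix A) = (\<Prod>i<n. char_poly_matrix A $$ (i, i))"
    using A acyclic by (intro det_eq_prod_diag_if_acyclic) auto
  then show ?thesis using A by (simp add: char_poly_def char_poly_matrix_def)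
qed

lemma proots_char_poly_if_acyclic:
  fixes A :: "'a::idom mat"
  assumes A: "A \<in> carrier_mat n n" and acyclic: "acyclic (offdiag_support A)"
  shows "proots (char_poly A) = mset (map (\<lambda>i. A $$ (i, i)) [0..<n])"
proof -
  have "proots (char_poly A) = (\<Sum>i<n. {#A $$ (i, i)#})"
    unfolding char_poly_eq_prod_diag_if_acyclic[OF A acyclic] by (subst proots_prod) auto
  also have "\<dots> = mset (map (\<lambda>i. A $$ (i, i)) [0..<n])"
    by (induction n) auto
  finally show ?thesis .
qed

lemma mult_mat_mono:
  fixes A :: "'a::ordered_semiring_0 mat"
  assumes "0\<^sub>m n m \<le> A" "A \<le> A'" "0\<^sub>m m p \<le> B" "B \<le> B'"
  shows "A * B \<le> A' * B'"
proof -
  have dims: "A \<in> carrier_mat n m" "A' \<in> carrier_mat n m" "B \<in> carrier_mat m p" "B' \<in> carrier_mat m p"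
    using assms by (auto simp: less_eq_mat_def)
  have entry: "A $$ (i, r) * B $$ (r, j) \<le> A' $$ (i, r) * B' $$ (r, j)"
    if "i < n" "r < m" "j < p" for i r j
  proof -
    have "0 \<le> A $$ (i, r)" "A $$ (i, r) \<le> A' $$ (i, r)" "0 \<le> B $$ (r, j)" "B $$ (r, j) \<le> B' $$ (r, j)"
      using assms that dims by (auto simp: less_eq_mat_def)
    then show ?thesis by (intro mult_mono) (auto intro: order_trans)
  qed
  show ?thesis
    using dims entry by (auto simp: less_eq_mat_def scalar_prod_def intro!: sum_mono)
qed

lemma nonneg_mult_mat:
  fixes A :: "'a::ordered_semiring_0 mat"
  assumes "0\<^sub>m n m \<le> A" "0\<^sub>m m p \<le> B"
  shows "0\<^sub>m n p \<le> A * B"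
proof -
  have "0\<^sub>m n m * 0\<^sub>m m p \<le> A * B" using assms by (intro mult_mat_mono) auto
  then show ?thesis by simp
qed

lemma nonneg_add_mat:
  fixes A :: "'a::ordered_comm_monoid_add mat"
  assumes "0\<^sub>m n m \<le> A" "0\<^sub>m n m \<le> B"
  shows "0\<^sub>m n m \<le> A + B"
  using assms by (auto simp: less_eq_mat_def)

lemma nonneg_pow_mat:
  fixes A :: "'a::ordered_semiring_1 mat"
  assumes "0\<^sub>m n n \<le> A"
  shows "0\<^sub>m n n \<le> A ^\<^sub>m k"
proof (induction k)
  case 0
  show ?case using assms by (auto simp: less_eq_mat_def)
next
  case (Suc k)
  show ?case using nonneg_mult_mat[OF Suc.IH assms] by simp
qed

lemma mult_mat_entry_ge_summand:
  fixes A :: "'a::ordered_semiring_1 mat"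
  assumes "0\<^sub>m n m \<le> A" "0\<^sub>m m p \<le> B" "i < n" "r < m" "j < p"
  shows "A $$ (i, r) * B $$ (r, j) \<le> (A * B) $$ (i, j)"
proof -
  have dims: "A \<in> carrier_mat n m" "B \<in> carrier_mat m p"
    using assms by (auto simp: less_eq_mat_def)
  have "A $$ (i, r) * B $$ (r, j) \<le> (\<Sum>s \<in> {0..<m}. A $$ (i, s) * B $$ (s, j))"
    using assms by (intro member_le_sum) (auto simp: less_eq_mat_def)
  then show ?thesis using dims assms(3,5) by (simp add: scalar_prod_def)
qed

lemma mult_add_mat_ge:
  fixes A :: "'a::ordered_semiring_0 mat"
  assumes "0\<^sub>m n m \<le> A" "0\<^sub>m n m \<le> B" "0\<^sub>m m p \<le> C" "0\<^sub>m m p \<le> D"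
  shows "A * C + B * D \<le> (A + B) * (C + D)"
proof -
  have dims: "A \<in> carrier_mat n m" "B \<in> carrier_mat n m" "C \<in> carrier_mat m p" "D \<in> carrier_mat m p"
    using assms by (auto simp: less_eq_mat_def)
  have entry: "A $$ (i, r) * C $$ (r, j) + B $$ (i, r) * D $$ (r, j)
      \<le> (A $$ (i, r) + B $$ (i, r)) * (C $$ (r, j) + D $$ (r, j))"
    if "i < n" "r < m" "j < p" for i r j
  proof -
    have "0 \<le> A $$ (i, r) * D $$ (r, j) + B $$ (i, r) * C $$ (r, j)"
      using assms that by (auto simp: less_eq_mat_def)
    moreover have "(A $$ (i, r) + B $$ (i, r)) * (C $$ (r, j) + D $$ (r, j))
        = (A $$ (i, r) * C $$ (r, j) + B $$ (i, r) * D $$ (r, j))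
          + (A $$ (i, r) * D $$ (r, j) + B $$ (i, r) * C $$ (r, j))"
      by (simp add: algebra_simps)
    ultimately show ?thesis by (simp add: add_increasing2)
  qed
  show ?thesis
    using dims entry by (auto simp: less_eq_mat_def scalar_prod_def sum.distrib[symmetric] intro!: sum_mono)
qed

lemma pow_add_mat_ge:
  fixes A :: "'a::ordered_semiring_1 mat"
  assumes A: "0\<^sub>m n n \<le> A" and B: "0\<^sub>m n n \<le> B"
  shows "A ^\<^sub>m Suc k + B ^\<^sub>m Suc k \<le> (A + B) ^\<^sub>m Suc k"
proof (induction k)
  case 0
  show ?case using A B by (auto simp: less_eq_mat_def)
next
  case (Suc k)
  have "A ^\<^sub>m Suc k * A + B ^\<^sub>m Suc k * B \<le> (A ^\<^sub>m Suc k + B ^\<^sub>m Suc k) * (A + B)"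
    using A B nonneg_pow_mat[OF A] nonneg_pow_mat[OF B] by (intro mult_add_mat_ge)
  also have "\<dots> \<le> (A + B) ^\<^sub>m Suc k * (A + B)"
  proof (rule mult_mat_mono[OF _ Suc.IH])
    show "0\<^sub>m n n \<le> A ^\<^sub>m Suc k + B ^\<^sub>m Suc k"
      by (rule nonneg_add_mat[OF nonneg_pow_mat[OF A] nonneg_pow_mat[OF B]])
    show "0\<^sub>m n n \<le> A + B" by (rule nonneg_add_mat[OF A B])
  qed simp
  finally show ?case by simp
qed

lemma pow_mat_pos_if_trancl:
  fixes A :: "'a::linordered_semiring_1_strict mat"
  assumes A: "0\<^sub>m n n \<le> A" and path: "(i, j) \<in> (offdiag_support A)\<^sup>+"
  shows "\<exists>k. 0 < (A ^\<^sub>m Suc k) $$ (i, j)"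
proof -
  have support: "a < n \<and> b < n \<and> 0 < A $$ (a, b)" if "(a, b) \<in> offdiag_support A" for a b
    using A that by (force simp: offdiag_support_def less_eq_mat_def order.not_eq_order_implies_strict)
  have "i < n" using tranclD[OF path] support by blast
  from path show ?thesis
  proof (induction rule: trancl_induct)
    case (base j)
    then show ?case using support[OF base] A by (intro exI[of _ 0]) (auto simp: less_eq_mat_def)
  next
    case (step j l)
    then obtain k where k: "0 < (A ^\<^sub>m Suc k) $$ (i, j)" by blast
    have jl: "j < n" "l < n" "0 < A $$ (j, l)" using support[OF step.hyps(2)] by auto
    have "0 < (A ^\<^sub>m Suc k) $$ (i, j) * A $$ (j, l)" using k jl by simp
    also have "\<dots> \<le> (A ^\<^sub>m Suc (Suc k)) $$ (i, l)"
      unfolding pow_mat.simps(2)[of A "Suc k"]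
      by (rule mult_mat_entry_ge_summand[OF nonneg_pow_mat[OF A] A \<open>i < n\<close> jl(1,2)])
    finally show ?case by blast
  qed
qed

definition trace :: "'a::comm_monoid_add mat \<Rightarrow> 'a" where
  "trace A = (\<Sum>i<dim_row A. A $$ (i, i))"

lemma trace_mono:
  fixes A :: "'a::ordered_comm_monoid_add mat"
  assumes "A \<le> B" "B \<in> carrier_mat n n"
  shows "trace A \<le> trace B"
  using assms by (auto simp: trace_def less_eq_mat_def intro!: sum_mono)

lemma trace_add:
  "A \<in> carrier_mat n n \<Longrightarrow> B \<in> carrier_mat n n \<Longrightarrow> trace (A + B) = trace A + trace B"
  by (simp add: trace_def sum.distrib)

lemma trace_mult_comm:
  fixes A :: "'a::comm_semiring_0 mat"
  assumes "A \<in> carrier_mat n m" "B \<in> carrier_mat m n"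
  shows "trace (A * B) = trace (B * A)"
proof -
  have "trace (A * B) = (\<Sum>i<n. \<Sum>r<m. A $$ (i, r) * B $$ (r, i))"
    using assms by (simp add: trace_def scalar_prod_def lessThan_atLeast0)
  also have "\<dots> = (\<Sum>r<m. \<Sum>i<n. B $$ (r, i) * A $$ (i, r))"
    by (subst sum.swap) (simp add: mult.commute)
  also have "\<dots> = trace (B * A)"
    using assms by (simp add: trace_def scalar_prod_def lessThan_atLeast0)
  finally show ?thesis .
qed

lemma trace_similar_mat_wit:
  fixes A :: "'a::comm_semiring_1 mat"
  assumes "similar_mat_wit A B P Q"
  shows "trace A = trace B"
proof -
  obtain n where carrier: "{A, B, P, Q} \<subseteq> carrier_mat n n" and "Q * P = 1\<^sub>m n" "A = P * B * Q"
    using similar_mat_witD[OF refl assms] by blast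
  then have "trace A = trace (Q * (P * B))"
    using trace_mult_comm[of "P * B" n n Q] by auto
  also have "Q * (P * B) = (Q * P) * B"
    using carrier by (simp add: assoc_mult_mat[of Q n n P n B n])
  also have "\<dots> = B"
    using carrier \<open>Q * P = 1\<^sub>m n\<close> by (simp add: left_mult_one_mat[of B n n])
  finally show ?thesis .
qed

lemma upper_triangular_mult:
  fixes A :: "'a::semiring_0 mat"
  assumes A: "A \<in> carrier_mat n n" and B: "B \<in> carrier_mat n n"
    and "upper_triangular A" "upper_triangular B"
  shows "upper_triangular (A * B)"
    and "i < n \<Longrightarrow> (A * B) $$ (i, i) = A $$ (i, i) * B $$ (i, i)"
proof -
  have zero: "A $$ (i, r) * B $$ (r, j) = 0" if "i < n" "r < n" "j \<le> i" "r \<noteq> i \<or> j < i" for i r j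
    using assms that by (cases "r < i") (auto simp: upper_triangular_def)
  have entry: "(A * B) $$ (i, j) = (\<Sum>r \<in> {0..<n}. A $$ (i, r) * B $$ (r, j))" if "i < n" "j < n" for i j
    using A B that by (simp add: scalar_prod_def)
  show "upper_triangular (A * B)"
  proof (rule upper_triangularI)
    fix i j assume "j < i" "i < dim_row (A * B)"
    then show "(A * B) $$ (i, j) = 0" using A entry zero by (auto intro!: sum.neutral)
  qed
  assume "i < n"
  then have "(A * B) $$ (i, i) = (\<Sum>r \<in> {i}. A $$ (i, r) * B $$ (r, i))"
    unfolding entry[OF \<open>i < n\<close> \<open>i < n\<close>] using zero by (intro sum.mono_neutral_right) auto
  then show "(A * B) $$ (i, i) = A $$ (i, i) * B $$ (i, i)" by simp
qed

lemma upper_triangular_pow: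
  fixes A :: "'a::semiring_1 mat"
  assumes A: "A \<in> carrier_mat n n" and "upper_triangular A"
  shows "upper_triangular (A ^\<^sub>m k) \<and> (\<forall>i<n. (A ^\<^sub>m k) $$ (i, i) = A $$ (i, i) ^ k)"
proof (induction k)
  case 0
  show ?case using A by auto
next
  case (Suc k)
  have "A ^\<^sub>m k \<in> carrier_mat n n" using A by simp
  then show ?case
    using upper_triangular_mult[OF _ A _ \<open>upper_triangular A\<close>] Suc by (simp add: power_commutes)
qed

lemma trace_pow_upper_triangular:
  fixes A :: "'a::semiring_1 mat"
  assumes "A \<in> carrier_mat n n" "upper_triangular A"
  shows "trace (A ^\<^sub>m k) = (\<Sum>i<n. A $$ (i, i) ^ k)"
  using upper_triangular_pow[OF assms] assms(1) by (simp add: trace_def)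

lemma trace_pow_shift_eq_sum_eigenvalues:
  fixes A :: "complex mat"
  assumes A: "A \<in> carrier_mat n n"
  shows "trace ((c \<cdot>\<^sub>m 1\<^sub>m n - A) ^\<^sub>m k) = (\<Sum>a \<in># proots (char_poly A). (c - a) ^ k)"
proof -
  obtain as where char_poly: "char_poly A = (\<Prod>a \<leftarrow> as. [:- a, 1:])"
    using char_poly_factorized[OF A] by blast
  obtain T P Q where "schur_decomposition A as = (T, P, Q)" by (cases "schur_decomposition A as")
  with schur_decomposition[OF A char_poly] have sim: "similar_mat_wit A T P Q"
    and T: "upper_triangular T" "diag_mat T = as" by auto
  have T_carrier: "T \<in> carrier_mat n n" using similar_mat_witD2[OF A sim] by auto
  have "(\<Sum>a \<leftarrow> as. proots [:- a, 1:]) = mset as" by (induction as) auto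
  then have proots: "proots (char_poly A) = mset as"
    unfolding char_poly using proots_prod_list[of "map (\<lambda>a. [:- a, 1:]) as"] by (force simp: o_def)
  have shift: "(-1) \<cdot>\<^sub>m char_matrix M c = c \<cdot>\<^sub>m 1\<^sub>m n - M" if "M \<in> carrier_mat n n" for M
    using that by (intro eq_matI) (auto simp: char_matrix_def)
  have "similar_mat_wit (c \<cdot>\<^sub>m 1\<^sub>m n - A) (c \<cdot>\<^sub>m 1\<^sub>m n - T) P Q"
    using similar_mat_wit_smult[OF similar_mat_wit_char_matrix[OF sim], of "-1" c]
    unfolding shift[OF A] shift[OF T_carrier] .
  then have "trace ((c \<cdot>\<^sub>m 1\<^sub>m n - A) ^\<^sub>m k) = trace ((c \<cdot>\<^sub>m 1\<^sub>m n - T) ^\<^sub>m k)"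
    by (intro trace_similar_mat_wit similar_mat_wit_pow)
  also have "\<dots> = (\<Sum>i<n. (c - T $$ (i, i)) ^ k)"
    using T T_carrier by (subst trace_pow_upper_triangular) (auto simp: upper_triangular_def)
  also have "\<dots> = (\<Sum>a \<leftarrow> as. (c - a) ^ k)"
    using T T_carrier by (auto simp: diag_mat_def sum_list_sum_nth atLeast0LessThan)
  finally show ?thesis by (simp add: proots sum_mset_sum_list flip: mset_map)
qed

lemma trace_pow_gt_if_cycle:
  fixes A :: "'a::linordered_idom mat"
  assumes f: "\<And>i. i < n \<Longrightarrow> 0 \<le> f i" and A: "0\<^sub>m n n \<le> A"
    and cycle: "(i, i) \<in> (offdiag_support A)\<^sup>+"
  shows "\<exists>m. (\<Sum>i<n. f i ^ m) < trace ((mat_diag n f + A) ^\<^sub>m m)"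
proof -
  obtain k where pos: "0 < (A ^\<^sub>m Suc k) $$ (i, i)" using pow_mat_pos_if_trancl[OF A cycle] by blast
  have "i < n" using tranclD[OF cycle] A by (auto simp: offdiag_support_def less_eq_mat_def)
  have D: "0\<^sub>m n n \<le> mat_diag n f" using f by (auto simp: less_eq_mat_def mat_diag_def)
  have "(\<Sum>i<n. f i ^ Suc k) = trace (mat_diag n f ^\<^sub>m Suc k)"
    by (subst trace_pow_upper_triangular) (auto simp: mat_diag_def upper_triangular_def)
  also have "\<dots> < trace (mat_diag n f ^\<^sub>m Suc k) + trace (A ^\<^sub>m Suc k)"
  proof -
    have "0 \<le> (A ^\<^sub>m Suc k) $$ (j, j)" if "j < n" for j
      using nonneg_pow_mat[OF A, of "Suc k"] that by (auto simp: less_eq_mat_def)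
    then have "0 < trace (A ^\<^sub>m Suc k)"
      using pos \<open>i < n\<close> A by (auto simp: trace_def less_eq_mat_def intro!: sum_pos2[of _ i])
    then show ?thesis by simp
  qed
  also have "\<dots> = trace (mat_diag n f ^\<^sub>m Suc k + A ^\<^sub>m Suc k)"
    using A by (intro trace_add[symmetric] pow_carrier_mat mat_diag_dim) (auto simp: less_eq_mat_def)
  also have "\<dots> \<le> trace ((mat_diag n f + A) ^\<^sub>m Suc k)"
    using pow_add_mat_ge[OF D A] A by (intro trace_mono[of _ _ n]) (auto simp: less_eq_mat_def)
  finally show ?thesis by blast
qed

lemma acyclic_if_proots_char_poly_eq_diag:
  fixes L :: "real mat"
  assumes L: "L \<in> carrier_mat n n"
    and offdiag_nonpos: "\<And>i j. i < n \<Longrightarrow> j < n \<Longrightarrow> i \<noteq> j \<Longrightarrow> L $$ (i, j) \<le> 0"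
    and spectrum: "proots (char_poly (map_mat complex_of_real L))
      = mset (map (\<lambda>i. complex_of_real (L $$ (i, i))) [0..<n])"
  shows "acyclic (offdiag_support L)"
  unfolding acyclic_def
proof (intro allI notI)
  fix i assume cycle: "(i, i) \<in> (offdiag_support L)\<^sup>+"
  define c where "c = (\<Sum>i<n. \<bar>L $$ (i, i)\<bar>)"
  define f where "f i = c - L $$ (i, i)" for i
  define A where "A = mat n n (\<lambda>(i, j). if i = j then 0 else - L $$ (i, j))"
  have f_nonneg: "0 \<le> f i" if "i < n" for i
  proof -
    have "\<bar>L $$ (i, i)\<bar> \<le> c" unfolding c_def using that by (intro member_le_sum) auto
    then show ?thesis unfolding f_def by linarith
  qed
  have A_nonneg: "0\<^sub>m n n \<le> A" using offdiag_nonpos by (auto simp: A_def less_eq_mat_def)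
  have "offdiag_support A = offdiag_support L" using L by (auto simp: offdiag_support_def A_def)
  then obtain m where less: "(\<Sum>i<n. f i ^ m) < trace ((mat_diag n f + A) ^\<^sub>m m)"
    using trace_pow_gt_if_cycle[of n f A i] f_nonneg A_nonneg cycle by auto
  have shift: "map_mat complex_of_real (mat_diag n f + A)
      = complex_of_real c \<cdot>\<^sub>m 1\<^sub>m n - map_mat complex_of_real L"
    using L by (intro eq_matI) (auto simp: f_def A_def mat_diag_def)
  have "complex_of_real (trace ((mat_diag n f + A) ^\<^sub>m m))
      = trace (map_mat complex_of_real ((mat_diag n f + A) ^\<^sub>m m))"
    using A_nonneg by (auto simp: trace_def less_eq_mat_def intro!: sum.cong)
  also have "\<dots> = trace (map_mat complex_of_real (mat_diag n f + A) ^\<^sub>m m)"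
    using A_nonneg by (subst of_real_hom.mat_hom_pow[of _ n]) (auto simp: less_eq_mat_def)
  also have "\<dots> = trace ((complex_of_real c \<cdot>\<^sub>m 1\<^sub>m n - map_mat complex_of_real L) ^\<^sub>m m)"
    by (simp only: shift)
  also have "\<dots> = complex_of_real (\<Sum>i<n. f i ^ m)"
    using L by (simp add: trace_pow_shift_eq_sum_eigenvalues spectrum sum_mset_sum_list
        interv_sum_list_conv_sum_set_nat atLeast0LessThan f_def flip: mset_map)
  finally have "complex_of_real (trace ((mat_diag n f + A) ^\<^sub>m m))
      = complex_of_real (\<Sum>i<n. f i ^ m)" by simp
  then have "trace ((mat_diag n f + A) ^\<^sub>m m) = (\<Sum>i<n. f i ^ m)" by (simp only: of_real_eq_iff)
  with less show False by simp
qed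

lemma proots_char_poly_eq_diag_iff_acyclic:
  fixes L :: "real mat"
  assumes L: "L \<in> carrier_mat n n"
    and offdiag_nonpos: "\<And>i j. i < n \<Longrightarrow> j < n \<Longrightarrow> i \<noteq> j \<Longrightarrow> L $$ (i, j) \<le> 0"
  shows "proots (char_poly (map_mat complex_of_real L))
      = mset (map (\<lambda>i. complex_of_real (L $$ (i, i))) [0..<n])
    \<longleftrightarrow> acyclic (offdiag_support L)"
proof
  assume acyclic: "acyclic (offdiag_support L)"
  have "offdiag_support (map_mat complex_of_real L) = offdiag_support L"
    by (auto simp: offdiag_support_def)
  then have "proots (char_poly (map_mat complex_of_real L))
      = mset (map (\<lambda>i. map_mat complex_of_real L $$ (i, i)) [0..<n])"
    using L acyclic by (intro proots_char_poly_if_acyclic) auto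
  also have "map (\<lambda>i. map_mat complex_of_real L $$ (i, i)) [0..<n]
      = map (\<lambda>i. complex_of_real (L $$ (i, i))) [0..<n]"
    using L by (intro map_cong) auto
  finally show "proots (char_poly (map_mat complex_of_real L))
      = mset (map (\<lambda>i. complex_of_real (L $$ (i, i))) [0..<n])" .
qed (rule acyclic_if_proots_char_poly_eq_diag[OF L offdiag_nonpos])

theorem theorem2p6:
  fixes n :: nat and w :: "nat \<Rightarrow> nat \<Rightarrow> real"
  assumes nonneg: "\<And>i j. i < n \<Longrightarrow> j < n \<Longrightarrow> w i j \<ge> 0"
    and no_loops: "\<And>i. i < n \<Longrightarrow> w i i = 0"
  shows "spectrum_mset (laplacian n w)
           = mset (map (\<lambda>i. complex_of_real (out_degree n w i)) [0..<n])
         \<longleftrightarrow> acyclic (digraph_edges n w)"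
proof -
  let ?L = "laplacian n w"
  have L: "?L \<in> carrier_mat n n" by (simp add: laplacian_def)
  have "map (\<lambda>i. complex_of_real (out_degree n w i)) [0..<n]
      = map (\<lambda>i. complex_of_real (?L $$ (i, i))) [0..<n]"
    using no_loops by (intro map_cong) (auto simp: laplacian_def)
  moreover have "digraph_edges n w = offdiag_support ?L"
    using no_loops by (auto simp: offdiag_support_def digraph_edges_def laplacian_def split: if_splits)
  moreover have "?L $$ (i, j) \<le> 0" if "i < n" "j < n" "i \<noteq> j" for i j
    using that nonneg by (simp add: laplacian_def)
  ultimately show ?thesis
    unfolding spectrum_mset_def using proots_char_poly_eq_diag_iff_acyclic[OF L] by presburger
qed

end
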